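(* Let $K$ be a fractal gasket with $\omega_\alpha,\omega_\beta\in K$. If $K$ satisfies the top isolated condition or $\omega_\gamma\notin K$, then every nontrivial connected component of $K$ (one containing more than one point) is a line segment. If in addition $\alpha$ and $\beta$ are not in the same horizontal block, then $K$ is totally disconnected.
   Context: Let $\Delta\subset\mathbb R^2$ be the triangle with vertices $\omega_\alpha=(0,0)$, $\omega_\beta=(1,0)$, $\omega_\gamma=(1/2,\sqrt3/2)$. A fractal gasket is the attractor $K$ of $\{\varphi_j(z)=r_j(z+d_j)\}_{j=1}^N$, $r_j\in(0,1)$, $d_j\in\mathbb R^2$, with $\bigcup_j\varphi_j(\Delta)\subset\Delta$ and, for $i\ne j$, $\varphi_i(\Delta)\cap\varphi_j(\Delta)$ consisting only of common vertices. $\Sigma=\{1,\dots,N\}$; when $\omega_\alpha\in K$, $\alpha\in\Sigma$ is the index with $\varphi_\alpha((0,0))=(0,0)$, and when $\omega_\beta\in K$, $\beta\in\Sigma$ is the index with $\varphi_\beta((1,0))=(1,0)$; $\gamma=-3$ if $\omega_\gamma\notin K$, otherwise $\varphi_\gamma(\omega_\gamma)=\omega_\gamma$. Top isolated condition: $\omega_\gamma\in K$ and $\varphi_\gamma(\Delta)\cap\varphi_j(\Delta)=\emptyset$ for all $j\ne\gamma$. A horizontal block is a set $I=\{i_1,\dots,i_k\}\subset\Sigma$ with $\varphi_{i_j}(\omega_\beta)=\varphi_{i_{j+1}}(\omega_\alpha)$ for $1\le j\le k-1$, maximal with this property. *)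

theory Defs
  imports "HOL-Analysis.Analysis"
begin

definition w_alpha :: "real \<times> real" where "w_alpha = (0, 0)"
definition w_beta :: "real \<times> real" where "w_beta = (1, 0)"
definition w_gamma :: "real \<times> real" where "w_gamma = (1/2, sqrt 3 / 2)"

definition Delta :: "(real \<times> real) set" where
  "Delta = convex hull {w_alpha, w_beta, w_gamma}"

definition sim :: "(nat \<Rightarrow> real) \<Rightarrow> (nat \<Rightarrow> real \<times> real) \<Rightarrow> nat \<Rightarrow> real \<times> real \<Rightarrow> real \<times> real" where
  "sim r d j z = r j *\<^sub>R (z + d j)"

definition fractal_gasket :: "nat \<Rightarrow> (nat \<Rightarrow> real) \<Rightarrow> (nat \<Rightarrow> real \<times> real) \<Rightarrow> (real \<times> real) set \<Rightarrow> bool" where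
  "fractal_gasket N r d K \<longleftrightarrow>
     N \<ge> 1 \<and>
     (\<forall>j\<in>{1..N}. 0 < r j \<and> r j < 1) \<and>
     (\<Union>j\<in>{1..N}. sim r d j ` Delta) \<subseteq> Delta \<and>
     (\<forall>i\<in>{1..N}. \<forall>j\<in>{1..N}. i \<noteq> j \<longrightarrow>
         sim r d i ` Delta \<inter> sim r d j ` Delta \<subseteq>
         sim r d i ` {w_alpha, w_beta, w_gamma} \<inter> sim r d j ` {w_alpha, w_beta, w_gamma}) \<and>
     compact K \<and> K \<noteq> {} \<and> K = (\<Union>j\<in>{1..N}. sim r d j ` K)"

definition top_isolated :: "nat \<Rightarrow> (nat \<Rightarrow> real) \<Rightarrow> (nat \<Rightarrow> real \<times> real) \<Rightarrow> (real \<times> real) set \<Rightarrow> bool" where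
  "top_isolated N r d K \<longleftrightarrow> w_gamma \<in> K \<and>
     (\<exists>g\<in>{1..N}. sim r d g w_gamma = w_gamma \<and>
        (\<forall>j\<in>{1..N}. j \<noteq> g \<longrightarrow> sim r d g ` Delta \<inter> sim r d j ` Delta = {}))"

definition horizontal_chain :: "(nat \<Rightarrow> real) \<Rightarrow> (nat \<Rightarrow> real \<times> real) \<Rightarrow> nat list \<Rightarrow> bool" where
  "horizontal_chain r d xs \<longleftrightarrow> xs \<noteq> [] \<and> distinct xs \<and>
     (\<forall>j. Suc j < length xs \<longrightarrow> sim r d (xs ! j) w_beta = sim r d (xs ! Suc j) w_alpha)"

definition horizontal_set :: "nat \<Rightarrow> (nat \<Rightarrow> real) \<Rightarrow> (nat \<Rightarrow> real \<times> real) \<Rightarrow> nat set \<Rightarrow> bool" where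
  "horizontal_set N r d I \<longleftrightarrow> I \<subseteq> {1..N} \<and> (\<exists>xs. horizontal_chain r d xs \<and> set xs = I)"

definition horizontal_block :: "nat \<Rightarrow> (nat \<Rightarrow> real) \<Rightarrow> (nat \<Rightarrow> real \<times> real) \<Rightarrow> nat set \<Rightarrow> bool" where
  "horizontal_block N r d I \<longleftrightarrow> horizontal_set N r d I \<and>
     (\<forall>J. horizontal_set N r d J \<and> I \<subseteq> J \<longrightarrow> J = I)"

definition totally_disconnected :: "'a::topological_space set \<Rightarrow> bool" where
  "totally_disconnected S \<longleftrightarrow> (\<forall>x\<in>S. connected_component_set S x = {x})"

end

theory Submission
  imports Defs
begin

(* Every phi j is a similarity of ratio at most rho < 1, and two pieces phi i K, phi j K meet
  only in images of vertices of Delta.  All estimates come from one self-similarity argument: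
  a nonnegative bounded quantity attached to connected subsets of K, which is multiplied by
  r i when a connected subset of the piece phi i K is pulled back to K and which is
  controlled on connected sets meeting several pieces, is at most rho times its own supremum,
  hence zero.

  Under the top isolated condition a connected subset of K through w_gamma is a point.  A
  connected set meeting several pieces therefore avoids the top pieces, and by boundary
  bumping each of its points is phi j y with y joined inside K to w_alpha or w_beta, all the
  pieces j involved having the same height.  Hence connected sets through w_alpha or w_beta lie
  on the base line, every connected subset of K is horizontal, and a component with two points
  is a horizontal segment.  If the base segment [w_alpha, w_beta] is not contained in K, the
  connected sets through w_alpha or w_beta are points, a connected set meeting several pieces
  is finite, and K is totally disconnected.  If it is contained in K, walking along it from
  w_alpha to w_beta produces a horizontal chain from a to b. *)

lemma nonpos_if_dominated_by_contraction:
  fixes f :: "'a \<Rightarrow> real"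
  assumes bounded: "\<And>q. q \<in> Q \<Longrightarrow> f q \<le> B" and c: "0 \<le> c" "c < 1"
    and dominated: "\<And>q. q \<in> Q \<Longrightarrow> \<exists>q'\<in>Q. f q \<le> c * f q'" and q: "q \<in> Q"
  shows "f q \<le> 0"
proof -
  define s where "s = Sup (f ` Q)"
  have upper: "f q \<le> s" if "q \<in> Q" for q
    unfolding s_def using that bounded by (meson bdd_aboveI2 cSup_upper image_eqI)
  have "s \<le> c * s"
    unfolding s_def
  proof (rule cSup_least)
    show "f ` Q \<noteq> {}" using q by auto
  next
    fix x assume "x \<in> f ` Q"
    then obtain q' where "q' \<in> Q" "x \<le> c * f q'" using dominated by blast
    with upper[of q'] c show "x \<le> c * Sup (f ` Q)"
      unfolding s_def by (meson mult_left_mono order_trans)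
  qed
  then have "(1 - c) * s \<le> 0" by (simp add: algebra_simps)
  then have "s \<le> 0" using c by (simp add: mult_le_0_iff)
  then show ?thesis using upper[OF q] by linarith
qed

lemma connected_subset_closed_cover:
  assumes "connected E" "E \<subseteq> A \<union> B" "closed A" "closed B" "A \<inter> B \<inter> E = {}"
  shows "E \<subseteq> A \<or> E \<subseteq> B"
  using connected_closedD[OF assms(1,5,2,3,4)] assms(2) by blast

lemma connected_through_cut_point:
  assumes E: "connected E" "E \<subseteq> A \<union> B" and closed: "closed A" "closed B"
    and cut: "A \<inter> B \<subseteq> {p}" and x: "x \<in> E" "x \<in> A" and not_in_A: "\<not> E \<subseteq> A"
  shows "p \<in> E \<inter> A \<inter> B" and "connected (E \<inter> A)"
proof -
  have "A \<inter> B \<inter> E \<noteq> {}"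
    using connected_closedD[OF E(1) _ E(2) closed] x not_in_A E(2) by blast
  then show p: "p \<in> E \<inter> A \<inter> B" using cut by blast
  show "connected (E \<inter> A)"
  proof (rule ccontr)
    have no_split: False
      if UV: "closed U" "closed V" "E \<inter> A \<subseteq> U \<union> V" "U \<inter> V \<inter> (E \<inter> A) = {}"
        "U \<inter> (E \<inter> A) \<noteq> {}" "V \<inter> (E \<inter> A) \<noteq> {}" "p \<notin> V" for U V
    proof -
      have "closed (U \<union> B)" "closed (V \<inter> A)" using UV closed by auto
      moreover have "E \<subseteq> (U \<union> B) \<union> (V \<inter> A)" "(U \<union> B) \<inter> (V \<inter> A) \<inter> E = {}"
        using E(2) UV(3,4,7) cut by blast+
      moreover have "(U \<union> B) \<inter> E \<noteq> {}" "(V \<inter> A) \<inter> E \<noteq> {}" using UV(5,6) by blast+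
      ultimately show False using E(1) unfolding connected_closed by blast
    qed
    assume "\<not> connected (E \<inter> A)"
    then obtain U V where "closed U" "closed V" "E \<inter> A \<subseteq> U \<union> V" "U \<inter> V \<inter> (E \<inter> A) = {}"
        "U \<inter> (E \<inter> A) \<noteq> {}" "V \<inter> (E \<inter> A) \<noteq> {}"
      unfolding connected_closed by blast
    moreover have "p \<notin> U \<or> p \<notin> V" using calculation(4) p by blast
    ultimately show False
      using no_split[of U V] no_split[of V U] by (auto simp: Int_commute Un_commute)
  qed
qed

lemma boundary_bumping_connected:
  fixes C F :: "'a::euclidean_space set"
  assumes "compact C" "connected C" "closed F" "x \<in> C" "x \<in> F" "\<not> C \<subseteq> F"
  shows "\<exists>D. connected D \<and> x \<in> D \<and> D \<subseteq> C \<inter> F \<and> D \<inter> closure (C - F) \<noteq> {}"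
proof -
  let ?X = "top_of_set C"
  let ?S = "C \<inter> F"
  define D where "D = connected_component_of_set (subtopology ?X ?S) x"
  have x: "x \<in> topspace (subtopology ?X ?S)" using assms by auto
  have "D \<inter> ?X frontier_of ?S \<noteq> {}"
  proof (rule boundary_bumping_theorem_closed)
    show "connected_space ?X" "compact_space ?X" "Hausdorff_space ?X"
      using assms by (simp_all add: connected_space_subtopology compact_space_subtopology
          Hausdorff_space_subtopology)
    show "closedin ?X ?S" "?S \<noteq> topspace ?X" using assms by (auto simp: closedin_closed_Int)
    show "D \<in> connected_components_of (subtopology ?X ?S)"
      unfolding D_def using x by (simp add: connected_component_in_connected_components_of)
  qed
  moreover have "?X frontier_of ?S \<subseteq> closure (C - F)"
    by (auto simp: frontier_of_closures closure_of_subtopology Diff_Int Int_absorb1)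
  moreover have "connectedin (subtopology ?X ?S) D"
    unfolding D_def by (rule connectedin_connected_component_of)
  then have "connected D" "D \<subseteq> ?S" by (auto simp: connectedin_subtopology)
  moreover have "x \<in> D" unfolding D_def using x by (simp add: connected_component_of_refl)
  ultimately show ?thesis by blast
qed

lemma closed_segment_horizontal:
  "closed_segment ((m::real), (c::real)) (M, c) = closed_segment m M \<times> {c}"
proof -
  have "(1 - u) *\<^sub>R (m, c) + u *\<^sub>R (M, c) = ((1 - u) *\<^sub>R m + u *\<^sub>R M, c)" for u :: real
    by (simp add: algebra_simps)
  then show ?thesis unfolding closed_segment_def by auto
qed

lemma horizontal_eq_Times:
  fixes E :: "(real \<times> real) set"
  assumes "\<And>z. z \<in> E \<Longrightarrow> snd z = c"
  shows "E = fst ` E \<times> {c}"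
  using assms by (force simp: image_iff prod_eq_iff)

lemma convex_connected_horizontal:
  fixes E :: "(real \<times> real) set"
  assumes "connected E" and horizontal: "\<And>z. z \<in> E \<Longrightarrow> snd z = c"
  shows "convex E"
proof -
  have "connected (fst ` E)" using assms(1) by (intro connected_continuous_image continuous_intros)
  then have "convex (fst ` E)" by (simp add: is_interval_convex_1[symmetric] is_interval_connected_1)
  moreover have "E = fst ` E \<times> {c}" using horizontal by (rule horizontal_eq_Times)
  ultimately show ?thesis by (metis convex_Times convex_singleton)
qed

lemma compact_connected_horizontal_eq_segment:
  fixes C :: "(real \<times> real) set"
  assumes "compact C" "connected C" and horizontal: "\<And>z. z \<in> C \<Longrightarrow> snd z = c"
    and two_points: "y \<in> C" "z \<in> C" "y \<noteq> z"
  shows "\<exists>p q. p \<noteq> q \<and> C = closed_segment p q"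
proof -
  have "continuous_on C fst" by (rule linear_continuous_on[OF bounded_linear_fst])
  then have "compact (fst ` C)" "connected (fst ` C)"
    using assms(1,2) by (simp_all add: compact_continuous_image connected_continuous_image)
  then obtain m M where mM: "fst ` C = {m..M}" by (meson connected_compact_interval_1)
  have "fst y \<noteq> fst z" "fst y \<in> {m..M}" "fst z \<in> {m..M}"
    using two_points horizontal mM by (auto simp: prod_eq_iff)
  then have "m < M" by auto
  moreover have "C = fst ` C \<times> {c}" using horizontal by (rule horizontal_eq_Times)
  ultimately have "C = closed_segment (m, c) (M, c)"
    using mM by (simp add: closed_segment_horizontal closed_segment_eq_real_ivl)
  then show ?thesis using \<open>m < M\<close> by (intro exI[of _ "(m, c)"] exI[of _ "(M, c)"]) simp
qed

lemma Delta_eq: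
  "Delta = {z. 0 \<le> snd z \<and> snd z \<le> sqrt 3 * fst z \<and> snd z \<le> sqrt 3 * (1 - fst z)}"
proof (intro set_eqI iffI; simp only: mem_Collect_eq)
  fix z assume "z \<in> Delta"
  then obtain u v w where uvw: "0 \<le> u" "0 \<le> v" "0 \<le> w" "u + v + w = 1"
    and z: "z = u *\<^sub>R w_alpha + v *\<^sub>R w_beta + w *\<^sub>R w_gamma"
    unfolding Delta_def convex_hull_3 by blast
  have fz: "fst z = v + w / 2" and sz: "snd z = w * sqrt 3 / 2"
    using z by (auto simp: w_alpha_def w_beta_def w_gamma_def)
  have "(v + w) * sqrt 3 \<le> 1 * sqrt 3" using uvw by (intro mult_right_mono) auto
  then show "0 \<le> snd z \<and> snd z \<le> sqrt 3 * fst z \<and> snd z \<le> sqrt 3 * (1 - fst z)"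
    unfolding fz sz using uvw by (auto simp: algebra_simps)
next
  fix z assume z: "0 \<le> snd z \<and> snd z \<le> sqrt 3 * fst z \<and> snd z \<le> sqrt 3 * (1 - fst z)"
  define u where "u = 1 - fst z - snd z / sqrt 3"
  define v where "v = fst z - snd z / sqrt 3"
  define w where "w = 2 * snd z / sqrt 3"
  have "0 \<le> u" "0 \<le> v" "0 \<le> w" "u + v + w = 1"
    using z unfolding u_def v_def w_def by (auto simp: field_simps mult.commute)
  moreover have "z = u *\<^sub>R w_alpha + v *\<^sub>R w_beta + w *\<^sub>R w_gamma"
    unfolding u_def v_def w_def w_alpha_def w_beta_def w_gamma_def by (auto simp: prod_eq_iff field_simps)
  ultimately show "z \<in> Delta" unfolding Delta_def convex_hull_3 by blast
qed

lemma convex_Delta: "convex Delta"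
  unfolding Delta_def by (rule convex_convex_hull)

lemma compact_Delta: "compact Delta"
  unfolding Delta_def by (simp add: compact_convex_hull)

lemma vertices_in_Delta: "w_alpha \<in> Delta" "w_beta \<in> Delta" "w_gamma \<in> Delta"
  unfolding Delta_def by (auto intro: hull_inc)

lemma sim_eq_affine: "sim r d j z = r j *\<^sub>R z + sim r d j w_alpha"
  by (simp add: sim_def w_alpha_def scaleR_add_right flip: zero_prod_def)

(* Not simp rules: the right-hand sides contain the instance z = w_alpha of the left. *)
lemma fst_sim: "fst (sim r d j z) = fst (sim r d j w_alpha) + r j * fst z"
  and snd_sim: "snd (sim r d j z) = snd (sim r d j w_alpha) + r j * snd z"
  by (subst sim_eq_affine; simp)+

lemma sim_w_beta: "sim r d j w_beta = sim r d j w_alpha + (r j, 0)"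
  by (subst sim_eq_affine) (simp add: w_beta_def add.commute)

lemma dist_sim: "0 < r j \<Longrightarrow> dist (sim r d j x) (sim r d j y) = r j * dist x y"
  by (simp add: sim_def dist_norm scaleR_add_right flip: scaleR_diff_right)

lemma continuous_on_sim: "continuous_on A (sim r d j)"
  unfolding sim_def by (intro continuous_intros)

lemma sim_closed_segment:
  "sim r d j ` closed_segment x y = closed_segment (sim r d j x) (sim r d j y)"
proof -
  have "(1 - u) *\<^sub>R sim r d j x + u *\<^sub>R sim r d j y = sim r d j ((1 - u) *\<^sub>R x + u *\<^sub>R y)" for u
    by (simp add: sim_def algebra_simps)
  then show ?thesis unfolding closed_segment_def by (auto simp: image_iff)
qed

lemma closed_segment_w_alpha_w_beta: "closed_segment w_alpha w_beta = {0..1} \<times> {0}"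
  unfolding w_alpha_def w_beta_def closed_segment_horizontal by (simp add: closed_segment_eq_real_ivl)

lemma horizontal_set_subset_block:
  assumes "horizontal_set N r d J"
  shows "\<exists>I. horizontal_block N r d I \<and> J \<subseteq> I"
proof -
  define H where "H = {I. horizontal_set N r d I \<and> J \<subseteq> I}"
  have "H \<subseteq> Pow {1..N}" unfolding H_def horizontal_set_def by auto
  then have fin: "finite H" "\<And>I. I \<in> H \<Longrightarrow> finite I"
    by (auto intro: finite_subset)
  have "J \<in> H" unfolding H_def using assms by simp
  then have "Max (card ` H) \<in> card ` H" using fin(1) by (intro Max_in) auto
  then obtain I where I: "I \<in> H" "card I = Max (card ` H)" by auto
  then have I_max: "card I' \<le> card I" if "I' \<in> H" for I' using that fin(1) by simp
  have "horizontal_block N r d I"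
    unfolding horizontal_block_def
  proof (intro conjI allI impI)
    show "horizontal_set N r d I" using I(1) unfolding H_def by simp
    fix I' assume I': "horizontal_set N r d I' \<and> I \<subseteq> I'"
    then have "I' \<in> H" using I(1) unfolding H_def by auto
    then show "I' = I" using I_max I' fin(2) card_subset_eq le_antisym card_mono by metis
  qed
  then show ?thesis using I(1) unfolding H_def by blast
qed

lemma horizontal_chain_snoc:
  assumes "horizontal_chain r d xs" "k \<notin> set xs" "sim r d (last xs) w_beta = sim r d k w_alpha"
  shows "horizontal_chain r d (xs @ [k])"
  unfolding horizontal_chain_def
proof (intro conjI allI impI)
  show "xs @ [k] \<noteq> []" "distinct (xs @ [k])" using assms(1,2) unfolding horizontal_chain_def by auto
  fix j assume j: "Suc j < length (xs @ [k])"
  show "sim r d ((xs @ [k]) ! j) w_beta = sim r d ((xs @ [k]) ! Suc j) w_alpha"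
  proof (cases "Suc j < length xs")
    case True then show ?thesis using assms(1) unfolding horizontal_chain_def by (simp add: nth_append)
  next
    case False
    then have "j = length xs - 1" "Suc j = length xs" using j by auto
    then show ?thesis using assms(1,3) unfolding horizontal_chain_def by (simp add: nth_append last_conv_nth)
  qed
qed

locale gasket =
  fixes N :: nat and r :: "nat \<Rightarrow> real" and d :: "nat \<Rightarrow> real \<times> real"
    and K :: "(real \<times> real) set"
  assumes gasket: "fractal_gasket N r d K"
begin

abbreviation S where "S \<equiv> {1..N}"
abbreviation phi where "phi \<equiv> sim r d"

definition rho :: real where "rho = Max (r ` S)"

definition height :: "nat \<Rightarrow> real" where "height j = snd (phi j w_alpha)"

definition within_piece :: "(real \<times> real) set \<Rightarrow> bool"
  where "within_piece E \<longleftrightarrow> (\<exists>i\<in>S. E \<subseteq> phi i ` K)"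

lemma r_pos: "j \<in> S \<Longrightarrow> 0 < r j"
  and r_less_1: "j \<in> S \<Longrightarrow> r j < 1"
  and phi_Delta: "j \<in> S \<Longrightarrow> z \<in> Delta \<Longrightarrow> phi j z \<in> Delta"
  and pieces_Delta_meet_at_vertices: "i \<in> S \<Longrightarrow> j \<in> S \<Longrightarrow> i \<noteq> j \<Longrightarrow>
     phi i ` Delta \<inter> phi j ` Delta \<subseteq>
     phi i ` {w_alpha, w_beta, w_gamma} \<inter> phi j ` {w_alpha, w_beta, w_gamma}"
  and compact_K: "compact K"
  and K_self_similar: "K = (\<Union>j\<in>S. phi j ` K)"
  using gasket unfolding fractal_gasket_def by blast+

lemma rho_ge: "j \<in> S \<Longrightarrow> r j \<le> rho"
  unfolding rho_def by simp

lemma rho_nonneg: "0 \<le> rho" and rho_less_1: "rho < 1"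
proof -
  have "S \<noteq> {}" using gasket unfolding fractal_gasket_def by auto
  then have "rho \<in> r ` S" unfolding rho_def by (intro Max_in) auto
  then show "0 \<le> rho" "rho < 1" using r_pos r_less_1 by force+
qed

lemma snd_phi: "snd (phi j z) = height j + r j * snd z"
  unfolding height_def by (rule snd_sim)

lemma dist_phi: "j \<in> S \<Longrightarrow> dist (phi j x) (phi j y) = r j * dist x y"
  using r_pos by (simp add: dist_sim)

lemma phi_eq_iff: "j \<in> S \<Longrightarrow> phi j x = phi j y \<longleftrightarrow> x = y"
  using dist_phi[of j x y] r_pos[of j] by auto

lemma height_nonneg: "j \<in> S \<Longrightarrow> 0 \<le> height j"
  using phi_Delta[OF _ vertices_in_Delta(1)] unfolding height_def Delta_eq by auto

lemma fst_phi_w_alpha_nonneg: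
  assumes "j \<in> S" shows "0 \<le> fst (phi j w_alpha)"
proof -
  have "0 \<le> sqrt 3 * fst (phi j w_alpha)"
    using phi_Delta[OF assms vertices_in_Delta(1)] unfolding Delta_eq by auto
  then show ?thesis by (simp add: zero_le_mult_iff)
qed

lemma fst_phi_w_beta_le_1:
  assumes "j \<in> S" shows "fst (phi j w_alpha) + r j \<le> 1"
proof -
  have "0 \<le> sqrt 3 * (1 - fst (phi j w_beta))"
    using phi_Delta[OF assms vertices_in_Delta(2)] unfolding Delta_eq by auto
  then show ?thesis by (simp add: zero_le_mult_iff sim_w_beta)
qed

lemma phi_Delta_subset_if_common_point:
  assumes i: "i \<in> S" and j: "j \<in> S" and "r i \<le> r j" and v: "v \<in> Delta"
    and common: "phi i v = phi j v"
  shows "phi i ` Delta \<subseteq> phi j ` Delta"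
proof
  fix x assume "x \<in> phi i ` Delta"
  then obtain w where w: "w \<in> Delta" "x = phi i w" by auto
  define t where "t = r i / r j"
  have t: "0 \<le> t" "t \<le> 1" "r j * t = r i"
    using r_pos[OF i] r_pos[OF j] \<open>r i \<le> r j\<close> unfolding t_def by auto
  define u where "u = (1 - t) *\<^sub>R v + t *\<^sub>R w"
  have "u \<in> Delta" unfolding u_def using convex_Delta v w t by (intro convexD) auto
  have "r i *\<^sub>R v + phi i w_alpha = r j *\<^sub>R v + phi j w_alpha"
    using common by (metis sim_eq_affine)
  then have "phi j u = phi i w"
    unfolding u_def by (subst (1 2) sim_eq_affine) (simp add: algebra_simps flip: t(3))
  then show "x \<in> phi j ` Delta" using \<open>u \<in> Delta\<close> w(2) by (metis image_eqI)
qed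

text \<open>Otherwise one triangle would contain the other, and they would share the
  non-vertex point phi i (1/2, 0).\<close>
lemma vertex_images_distinct:
  assumes i: "i \<in> S" and j: "j \<in> S" and "i \<noteq> j" and v: "v \<in> {w_alpha, w_beta, w_gamma}"
  shows "phi i v \<noteq> phi j v"
proof
  assume common: "phi i v = phi j v"
  have mid: "((1/2, 0)::real \<times> real) \<in> Delta - {w_alpha, w_beta, w_gamma}"
    by (auto simp: Delta_eq w_alpha_def w_beta_def w_gamma_def)
  have "v \<in> Delta" using v vertices_in_Delta by auto
  have "phi i ` Delta \<subseteq> phi j ` Delta \<or> phi j ` Delta \<subseteq> phi i ` Delta"
    using phi_Delta_subset_if_common_point[OF i j _ \<open>v \<in> Delta\<close> common]
      phi_Delta_subset_if_common_point[OF j i _ \<open>v \<in> Delta\<close> common[symmetric]] by linarith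
  then have "phi i (1/2, 0) \<in> phi i ` Delta \<inter> phi j ` Delta \<or> phi j (1/2, 0) \<in> phi i ` Delta \<inter> phi j ` Delta"
    using mid by blast
  then show False
    using pieces_Delta_meet_at_vertices[OF i j \<open>i \<noteq> j\<close>] phi_eq_iff[OF i] phi_eq_iff[OF j] mid by blast
qed

lemma K_subset_Delta: "K \<subseteq> Delta"
proof
  fix x assume x: "x \<in> K"
  obtain B where B: "\<And>q. q \<in> K \<Longrightarrow> norm q \<le> B"
    using compact_imp_bounded[OF compact_K] bounded_iff by blast
  have "infdist x Delta \<le> 0"
  proof (rule nonpos_if_dominated_by_contraction[where Q = K and c = rho])
    fix q assume q: "q \<in> K"
    have "infdist q Delta \<le> dist q w_alpha" using vertices_in_Delta by (intro infdist_le)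
    also have "\<dots> \<le> B" using B[OF q] by (simp add: w_alpha_def dist_norm flip: zero_prod_def)
    finally show "infdist q Delta \<le> B" .
    obtain j y where jy: "j \<in> S" "y \<in> K" "q = phi j y" using q K_self_similar by blast
    obtain z where z: "z \<in> Delta" "infdist y Delta = dist y z"
      using infdist_attains_inf[of Delta y] compact_Delta vertices_in_Delta
      by (metis compact_imp_closed empty_iff)
    have "infdist q Delta \<le> dist q (phi j z)" using phi_Delta[OF jy(1) z(1)] by (intro infdist_le)
    also have "\<dots> = r j * dist y z" using jy dist_phi by simp
    also have "\<dots> \<le> rho * infdist y Delta" unfolding z(2) using rho_ge[OF jy(1)] by (intro mult_right_mono) auto
    finally show "\<exists>q'\<in>K. infdist q Delta \<le> rho * infdist q' Delta" using jy(2) by blast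
  qed (use x rho_nonneg rho_less_1 in auto)
  then have "infdist x Delta = 0" using infdist_nonneg[of x Delta] by linarith
  then show "x \<in> Delta"
    using in_closure_iff_infdist_zero[of Delta x] vertices_in_Delta compact_Delta
    by (metis closure_closed compact_imp_closed empty_iff)
qed

lemma snd_nonneg: "x \<in> K \<Longrightarrow> 0 \<le> snd x"
  using K_subset_Delta by (auto simp: Delta_eq)

lemma piece_subset_K: "j \<in> S \<Longrightarrow> phi j ` K \<subseteq> K"
  using K_self_similar by blast

lemma compact_phi_image: "compact A \<Longrightarrow> compact (phi j ` A)"
  by (rule compact_continuous_image[OF continuous_on_sim])

lemma closed_phi_image: "compact A \<Longrightarrow> closed (phi j ` A)"
  by (simp add: compact_imp_closed compact_phi_image)

lemma closed_other_pieces: "closed (\<Union>k\<in>S - {j}. phi k ` K)"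
  using closed_phi_image[OF compact_K] by (intro closed_UN) auto

lemma pieces_meet_at_vertices:
  assumes i: "i \<in> S" and j: "j \<in> S" and "i \<noteq> j" and x: "x \<in> phi i ` K" "x \<in> phi j ` K"
  obtains v where "v \<in> {w_alpha, w_beta, w_gamma}" "v \<in> K" "x = phi i v"
proof -
  obtain y where y: "y \<in> K" "x = phi i y" using x by auto
  have "x \<in> phi i ` Delta \<inter> phi j ` Delta" using x K_subset_Delta by blast
  then obtain v where "v \<in> {w_alpha, w_beta, w_gamma}" "x = phi i v"
    using pieces_Delta_meet_at_vertices[OF i j \<open>i \<noteq> j\<close>] by blast
  moreover have "v = y" using calculation y phi_eq_iff[OF i] by auto
  ultimately show thesis using that y by blast
qed

lemma connected_within_piece_rescaled:
  assumes i: "i \<in> S" and "connected E" "E \<subseteq> phi i ` K"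
  obtains D where "connected D" "D \<subseteq> K" "E = phi i ` D"
proof
  let ?psi = "\<lambda>z. (1 / r i) *\<^sub>R z - d i"
  have psi_phi: "?psi (phi i z) = z" for z using r_pos[OF i] by (simp add: sim_def)
  show "connected (?psi ` E)" using \<open>connected E\<close> by (intro connected_continuous_image continuous_intros)
  show "?psi ` E \<subseteq> K" using \<open>E \<subseteq> phi i ` K\<close> psi_phi by auto
  have "phi i (?psi x) = x" if "x \<in> E" for x using that \<open>E \<subseteq> phi i ` K\<close> psi_phi by auto
  then show "E = phi i ` ?psi ` E" by (simp add: image_image cong: image_cong)
qed

lemma phi_in_phi_image_iff:
  assumes "j \<in> S" shows "phi j x \<in> phi j ` A \<longleftrightarrow> x \<in> A"
proof -
  have "inj (phi j)" using phi_eq_iff[OF assms] by (auto intro: injI)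
  then show ?thesis by (rule inj_image_mem_iff)
qed

lemma in_some_piece: "x \<in> K \<Longrightarrow> \<exists>j\<in>S. x \<in> phi j ` K"
  by (subst (asm) K_self_similar) blast

lemma connected_leaving_piece_meets_other_piece:
  assumes i: "i \<in> S" and E: "connected E" "E \<subseteq> K" and "p0 \<in> E" "p0 \<in> phi i ` K"
    and "\<not> E \<subseteq> phi i ` K"
  obtains p k where "p \<in> E" "p \<in> phi i ` K" "k \<in> S" "k \<noteq> i" "p \<in> phi k ` K"
proof -
  define R where "R = (\<Union>k\<in>S - {i}. phi k ` K)"
  have cover: "E \<subseteq> phi i ` K \<union> R"
  proof
    fix z assume "z \<in> E"
    then obtain k where "k \<in> S" "z \<in> phi k ` K" using E(2) in_some_piece by blast
    then show "z \<in> phi i ` K \<union> R" unfolding R_def by (cases "k = i") auto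
  qed
  have "phi i ` K \<inter> R \<inter> E \<noteq> {}"
  proof
    assume disjoint: "phi i ` K \<inter> R \<inter> E = {}"
    have "closed R" unfolding R_def by (rule closed_other_pieces)
    then have "E \<subseteq> phi i ` K \<or> E \<subseteq> R"
      using connected_subset_closed_cover[OF E(1) cover closed_phi_image[OF compact_K]] disjoint
      by blast
    then show False using assms(4-6) disjoint by blast
  qed
  then show thesis using that unfolding R_def by blast
qed

lemma closure_connected_subset:
  assumes "connected E" "E \<subseteq> K"
  shows "compact (closure E)" "connected (closure E)" "closure E \<subseteq> K"
proof -
  show "closure E \<subseteq> K" using assms(2) compact_K by (simp add: closure_minimal compact_imp_closed)
  show "compact (closure E)"
    using bounded_subset[OF compact_imp_bounded[OF compact_K] assms(2)] by simp
  show "connected (closure E)" using assms(1) by (rule connected_imp_connected_closure)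
qed

lemma dist_le_diameter_K: "x \<in> K \<Longrightarrow> y \<in> K \<Longrightarrow> dist x y \<le> diameter K"
  using compact_imp_bounded[OF compact_K] by (rule diameter_bounded_bound)

text \<open>The supremum of g over pairs of points of connected subsets of K is at most rho times
  itself: a continuum inside one piece is rescaled, and on the others g vanishes.\<close>
lemma scaling_pair_function_vanishes:
  fixes g :: "real \<times> real \<Rightarrow> real \<times> real \<Rightarrow> real"
  assumes nonneg: "\<And>x y. 0 \<le> g x y" and bounded: "\<And>x y. x \<in> K \<Longrightarrow> y \<in> K \<Longrightarrow> g x y \<le> B"
    and scaling: "\<And>i x y. i \<in> S \<Longrightarrow> g (phi i x) (phi i y) = r i * g x y"
    and not_within: "\<And>E x y. compact E \<Longrightarrow> connected E \<Longrightarrow> E \<subseteq> K \<Longrightarrow> \<not> within_piece E \<Longrightarrow>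
      x \<in> E \<Longrightarrow> y \<in> E \<Longrightarrow> g x y = 0"
    and E: "connected E" "E \<subseteq> K" "x \<in> E" "y \<in> E"
  shows "g x y = 0"
proof -
  let ?Q = "{(E, x, y). connected E \<and> E \<subseteq> K \<and> x \<in> E \<and> y \<in> E}"
  let ?f = "\<lambda>(E::(real \<times> real) set, x, y). g x y"
  have "?f (E, x, y) \<le> 0"
  proof (rule nonpos_if_dominated_by_contraction[of ?Q ?f B rho])
    show "(E, x, y) \<in> ?Q" using E by simp
    show "0 \<le> rho" "rho < 1" using rho_nonneg rho_less_1 by auto
  next
    fix q assume "q \<in> ?Q"
    then obtain E x y where Q: "q = (E, x, y)" "connected E" "E \<subseteq> K" "x \<in> E" "y \<in> E" by blast
    have "x \<in> K" "y \<in> K" using Q(3-5) by blast+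
    then show "?f q \<le> B" using Q(1) bounded by simp
    define E' where "E' = closure E"
    have E': "compact E'" "connected E'" "E' \<subseteq> K" "x \<in> E'" "y \<in> E'"
      using closure_connected_subset[OF Q(2,3)] Q(4,5) closure_subset unfolding E'_def by blast+
    show "\<exists>q'\<in>?Q. ?f q \<le> rho * ?f q'"
    proof (cases "within_piece E'")
      case True
      then obtain i where i: "i \<in> S" "E' \<subseteq> phi i ` K" unfolding within_piece_def by blast
      obtain D where D: "connected D" "D \<subseteq> K" "E' = phi i ` D"
        using connected_within_piece_rescaled[OF i(1) E'(2) i(2)] by blast
      obtain x' y' where xy: "x' \<in> D" "x = phi i x'" "y' \<in> D" "y = phi i y'"
        using E'(4,5) D(3) by blast
      have "g x y = r i * g x' y'" using xy(2,4) scaling[OF i(1)] by simp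
      also have "\<dots> \<le> rho * g x' y'" using rho_ge[OF i(1)] nonneg by (rule mult_right_mono)
      finally have "?f q \<le> rho * ?f (D, x', y')" using Q(1) by simp
      moreover have "(D, x', y') \<in> ?Q" using D(1,2) xy(1,3) by simp
      ultimately show ?thesis by blast
    next
      case False
      then have "?f q = 0" using not_within[OF E'(1-3) False E'(4,5)] Q(1) by simp
      then show ?thesis using \<open>q \<in> ?Q\<close> by force
    qed
  qed
  then show ?thesis using nonneg[of x y] by simp
qed

end

locale based_gasket = gasket +
  fixes a b :: nat
  assumes w_alpha_in_K: "w_alpha \<in> K" and w_beta_in_K: "w_beta \<in> K"
    and a: "a \<in> {1..N}" "sim r d a w_alpha = w_alpha"
    and b: "b \<in> {1..N}" "sim r d b w_beta = w_beta"
begin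

lemma w_alpha_only_in_piece_a:
  assumes j: "j \<in> S" and "w_alpha \<in> phi j ` Delta"
  shows "j = a"
proof -
  obtain w where w: "w \<in> Delta" "phi j w = w_alpha" using assms(2) by auto
  have "0 = height j + r j * snd w" "0 = fst (phi j w_alpha) + r j * fst w"
    using w(2) snd_phi[of j w] fst_sim[of r d j w] by (auto simp: w_alpha_def)
  moreover have "0 \<le> snd w" "0 \<le> sqrt 3 * fst w" using w(1) unfolding Delta_eq by auto
  moreover have "0 \<le> r j * snd w" "0 \<le> r j * fst w"
    using calculation(3,4) r_pos[OF j] by (simp_all add: zero_le_mult_iff)
  ultimately have "height j = 0" "fst (phi j w_alpha) = 0"
    using height_nonneg[OF j] fst_phi_w_alpha_nonneg[OF j] by linarith+
  then have "phi j w_alpha = w_alpha" unfolding height_def by (simp add: w_alpha_def prod_eq_iff)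
  then show "j = a" using vertex_images_distinct[OF j a(1), of w_alpha] a(2) by auto
qed

lemma w_beta_only_in_piece_b:
  assumes j: "j \<in> S" and "w_beta \<in> phi j ` Delta"
  shows "j = b"
proof -
  obtain w where w: "w \<in> Delta" "phi j w = w_beta" using assms(2) by auto
  have "0 = height j + r j * snd w" "1 = fst (phi j w_alpha) + r j * fst w"
    using w(2) snd_phi[of j w] fst_sim[of r d j w] by (auto simp: w_beta_def)
  moreover have "0 \<le> snd w" "snd w \<le> sqrt 3 * (1 - fst w)" using w(1) unfolding Delta_eq by auto
  moreover have "0 \<le> r j * snd w" using calculation(3) r_pos[OF j] by simp
  ultimately have "height j = 0" "r j * snd w = 0" using height_nonneg[OF j] by linarith+
  then have "snd w = 0" using r_pos[OF j] by simp
  then have "r j * fst w \<le> r j"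
    using \<open>snd w \<le> sqrt 3 * (1 - fst w)\<close> r_pos[OF j] by (simp add: zero_le_mult_iff)
  then have "fst (phi j w_alpha) + r j = 1"
    using \<open>1 = fst (phi j w_alpha) + r j * fst w\<close> fst_phi_w_beta_le_1[OF j] by linarith
  then have "phi j w_beta = w_beta"
    using \<open>height j = 0\<close> sim_w_beta[of r d j] unfolding height_def by (simp add: w_beta_def prod_eq_iff)
  then show "j = b" using vertex_images_distinct[OF j b(1), of w_beta] b(2) by auto
qed

lemma piece_containing_base_vertex:
  assumes i: "i \<in> S" and v: "v \<in> {w_alpha, w_beta}" "v \<in> phi i ` K"
  shows "phi i v = v" "height i = 0"
proof -
  have vD: "v \<in> phi i ` Delta" using v(2) K_subset_Delta by blast
  from v(1) consider "v = w_alpha" | "v = w_beta" by blast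
  then show fixed: "phi i v = v"
  proof cases
    case 1
    have "i = a" using vD unfolding 1 by (rule w_alpha_only_in_piece_a[OF i])
    then show ?thesis using 1 a(2) by simp
  next
    case 2
    have "i = b" using vD unfolding 2 by (rule w_beta_only_in_piece_b[OF i])
    then show ?thesis using 2 b(2) by simp
  qed
  then show "height i = 0"
    using v(1) snd_phi[of i v] by (auto simp: w_alpha_def w_beta_def)
qed

lemma base_segment_from_piece:
  assumes i: "i \<in> S" and "closed_segment (phi i w_alpha) (phi i w_beta) \<subseteq> K"
  shows "closed_segment w_alpha w_beta \<subseteq> K"
proof
  fix w assume w: "w \<in> closed_segment w_alpha w_beta"
  have "w \<in> Delta"
    using closed_segment_subset[OF vertices_in_Delta(1,2) convex_Delta] w by blast
  have "phi i w \<in> K" using assms(2) w unfolding sim_closed_segment[symmetric] by blast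
  then obtain k y where k: "k \<in> S" "y \<in> K" "phi i w = phi k y" using K_self_similar by blast
  show "w \<in> K"
  proof (cases "k = i")
    case True
    then show ?thesis using k phi_eq_iff[OF i] by simp
  next
    case False
    have "phi i w \<in> phi i ` Delta \<inter> phi k ` Delta" using \<open>w \<in> Delta\<close> k K_subset_Delta by blast
    then obtain v where "v \<in> {w_alpha, w_beta, w_gamma}" "phi i w = phi i v"
      using pieces_Delta_meet_at_vertices[OF i k(1)] False by blast
    then have "w \<in> {w_alpha, w_beta, w_gamma}" using phi_eq_iff[OF i] by simp
    moreover have "w \<noteq> w_gamma" using w by (auto simp: closed_segment_w_alpha_w_beta w_gamma_def)
    ultimately show ?thesis using w_alpha_in_K w_beta_in_K by auto
  qed
qed

lemma fst_phi_le_on_bottom_edge: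
  assumes i: "i \<in> S" and "w \<in> K" and "snd (phi i w) = height i"
  shows "fst (phi i w) \<le> fst (phi i w_beta)"
proof -
  have "snd w = 0" using assms(3) r_pos[OF i] by (simp add: snd_phi)
  then have "fst w \<le> 1" using \<open>w \<in> K\<close> K_subset_Delta by (auto simp: Delta_eq zero_le_mult_iff)
  then have "r i * fst w \<le> r i" using r_pos[OF i] by simp
  then show ?thesis using fst_sim[of r d i w] by (simp add: sim_w_beta)
qed

text \<open>Points of the base segment just to the right of phi i w_beta lie outside the piece i,
  hence in the closed union of the other pieces.\<close>
lemma base_segment_beyond_piece:
  assumes seg: "closed_segment w_alpha w_beta \<subseteq> K"
    and i: "i \<in> S" "height i = 0" and not_end: "phi i w_beta \<noteq> w_beta"
  shows "\<exists>k\<in>S. k \<noteq> i \<and> phi i w_beta \<in> phi k ` K"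
proof -
  define q where "q = phi i w_beta"
  have "snd q = 0" using i(2) unfolding q_def by (simp add: snd_phi w_beta_def)
  moreover have "q \<in> Delta" unfolding q_def using phi_Delta[OF i(1) vertices_in_Delta(2)] .
  ultimately have q: "q = (fst q, 0)" "0 \<le> fst q" "fst q < 1"
    using not_end unfolding q_def by (auto simp: Delta_eq zero_le_mult_iff prod_eq_iff w_beta_def)
  have q_seg: "closed_segment q w_beta = {fst q..1} \<times> {0}"
    by (subst q(1)) (simp add: w_beta_def closed_segment_horizontal closed_segment_eq_real_ivl q(3))
  define R where "R = (\<Union>k\<in>S - {i}. phi k ` K)"
  have "open_segment q w_beta \<subseteq> R"
  proof
    fix z assume "z \<in> open_segment q w_beta"
    then have z: "snd z = 0" "fst q < fst z" "fst z \<le> 1"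
      using q unfolding open_segment_def q_seg by (auto simp: prod_eq_iff)
    then have "z \<in> closed_segment w_alpha w_beta"
      using q(2) unfolding closed_segment_w_alpha_w_beta by (simp add: mem_Times_iff)
    then obtain k where k: "k \<in> S" "z \<in> phi k ` K" using seg in_some_piece by blast
    have "k \<noteq> i"
    proof
      assume "k = i"
      then obtain w where "w \<in> K" "z = phi i w" using k by blast
      then have "fst z \<le> fst q"
        using fst_phi_le_on_bottom_edge[OF i(1)] z(1) i(2) unfolding q_def by simp
      then show False using z(2) by simp
    qed
    then show "z \<in> R" unfolding R_def using k by blast
  qed
  then have "closure (open_segment q w_beta) \<subseteq> R"
    using closed_other_pieces unfolding R_def by (rule closure_minimal)
  then have "q \<in> R" using not_end ends_in_segment(1) unfolding q_def by auto
  then show ?thesis unfolding R_def q_def by blast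
qed

lemma base_segment_continues:
  assumes seg: "closed_segment w_alpha w_beta \<subseteq> K"
    and i: "i \<in> S" "height i = 0" and not_end: "phi i w_beta \<noteq> w_beta"
  shows "\<exists>k\<in>S. phi k w_alpha = phi i w_beta"
proof -
  obtain k where k: "k \<in> S" "k \<noteq> i" "phi i w_beta \<in> phi k ` K"
    using base_segment_beyond_piece[OF assms] by blast
  moreover have "phi i w_beta \<in> phi i ` K" using w_beta_in_K by blast
  ultimately obtain u where u: "u \<in> {w_alpha, w_beta, w_gamma}" "phi i w_beta = phi k u"
    using pieces_meet_at_vertices[OF k(1) i(1) k(2)] by metis
  have "u \<noteq> w_beta" using u vertex_images_distinct[OF k(1) i(1) k(2), of w_beta] by auto
  moreover have "u \<noteq> w_gamma"
  proof
    assume "u = w_gamma"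
    then have "snd (phi i w_beta) = height k + r k * (sqrt 3 / 2)"
      using u(2) by (simp add: snd_phi w_gamma_def)
    moreover have "snd (phi i w_beta) = 0" using i(2) by (simp add: snd_phi w_beta_def)
    moreover have "0 < r k * (sqrt 3 / 2)" using r_pos[OF k(1)] by simp
    ultimately show False using height_nonneg[OF k(1)] by linarith
  qed
  ultimately have "u = w_alpha" using u(1) by blast
  then show ?thesis using u(2) k(1) by (intro bexI[of _ k]) simp_all
qed

lemma horizontal_chain_w_alpha:
  assumes chain: "horizontal_chain r d xs" and "hd xs = a" and "m < length xs"
  shows "phi (xs ! m) w_alpha = (\<Sum>l<m. r (xs ! l), 0)"
  using assms(3)
proof (induction m)
  case 0
  have "xs ! 0 = a" using chain \<open>hd xs = a\<close> unfolding horizontal_chain_def by (simp add: hd_conv_nth)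
  then show ?case using a(2) by (simp add: w_alpha_def)
next
  case (Suc m)
  have "phi (xs ! Suc m) w_alpha = phi (xs ! m) w_beta"
    using chain Suc.prems unfolding horizontal_chain_def by simp
  then show ?case using Suc by (simp add: sim_w_beta)
qed

lemma horizontal_chain_w_alpha_left_of_end:
  assumes chain: "horizontal_chain r d xs" "set xs \<subseteq> S" "hd xs = a" and m: "m < length xs"
  shows "fst (phi (xs ! m) w_alpha) < fst (phi (last xs) w_beta)"
proof -
  define L where "L = length xs"
  have "xs \<noteq> []" using chain(1) unfolding horizontal_chain_def by simp
  then have last: "last xs = xs ! (L - 1)" "L - 1 < L" by (simp_all add: L_def last_conv_nth)
  have pos: "0 < r (xs ! l)" if "l < L" for l
    using that chain(2) r_pos nth_mem unfolding L_def by blast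
  have "(\<Sum>l<m. r (xs ! l)) \<le> (\<Sum>l<L - 1. r (xs ! l))"
    using m pos unfolding L_def by (intro sum_mono2) (auto intro: less_imp_le)
  also have "\<dots> < (\<Sum>l<L - 1. r (xs ! l)) + r (last xs)" using pos[OF last(2)] last(1) by simp
  also have "\<dots> = fst (phi (last xs) w_beta)"
    using horizontal_chain_w_alpha[OF chain(1,3)] last unfolding L_def by (simp add: sim_w_beta)
  finally show ?thesis using horizontal_chain_w_alpha[OF chain(1,3) m] by simp
qed

text \<open>A longest horizontal chain starting at a must end at b: otherwise
  base_segment_continues would extend it.\<close>
lemma base_segment_chain:
  assumes seg: "closed_segment w_alpha w_beta \<subseteq> K"
  shows "\<exists>xs. horizontal_chain r d xs \<and> set xs \<subseteq> S \<and> a \<in> set xs \<and> b \<in> set xs"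
proof -
  define CH where "CH = {xs. horizontal_chain r d xs \<and> set xs \<subseteq> S \<and> hd xs = a}"
  have "CH \<subseteq> {xs. set xs \<subseteq> S \<and> distinct xs}" unfolding CH_def horizontal_chain_def by auto
  then have "finite CH" using finite_subset_distinct[of S] finite_subset by blast
  moreover have "[a] \<in> CH" unfolding CH_def horizontal_chain_def using a(1) by auto
  ultimately have "Max (length ` CH) \<in> length ` CH" by (intro Max_in) auto
  then obtain xs where xs: "xs \<in> CH" "length xs = Max (length ` CH)" by auto
  then have longest: "length ys \<le> length xs" if "ys \<in> CH" for ys using that \<open>finite CH\<close> by simp
  have chain: "horizontal_chain r d xs" "set xs \<subseteq> S" "hd xs = a" "xs \<noteq> []"
    using xs(1) unfolding CH_def horizontal_chain_def by auto
  define i where "i = last xs"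
  have "i \<in> set xs" unfolding i_def using chain(4) by simp
  then have "i \<in> S" using chain(2) by blast
  have "phi i w_beta = w_beta"
  proof (rule ccontr)
    assume "phi i w_beta \<noteq> w_beta"
    moreover have "height i = 0"
      using horizontal_chain_w_alpha[OF chain(1,3), of "length xs - 1"] chain(4)
      unfolding i_def height_def by (simp add: last_conv_nth)
    ultimately obtain k where k: "k \<in> S" "phi k w_alpha = phi i w_beta"
      using base_segment_continues[OF seg \<open>i \<in> S\<close>] by blast
    have "k \<notin> set xs"
      using horizontal_chain_w_alpha_left_of_end[OF chain(1-3)] k(2)
      unfolding i_def by (metis in_set_conv_nth less_irrefl)
    moreover have "phi (last xs) w_beta = phi k w_alpha" using k(2) unfolding i_def by simp
    ultimately have "horizontal_chain r d (xs @ [k])" by (rule horizontal_chain_snoc[OF chain(1)])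
    moreover have "hd (xs @ [k]) = a" "set (xs @ [k]) \<subseteq> S" using chain(2,3,4) k(1) by auto
    ultimately have "xs @ [k] \<in> CH" unfolding CH_def by blast
    then show False using longest[of "xs @ [k]"] by simp
  qed
  then have "i = b"
    using vertex_images_distinct[OF \<open>i \<in> S\<close> b(1) _, of w_beta] b(2) by (metis insert_iff)
  moreover have "a \<in> set xs" "last xs \<in> set xs" using chain(3,4) by auto
  ultimately show ?thesis using chain(1,2) unfolding i_def by blast
qed

lemma base_segment_block:
  assumes "closed_segment w_alpha w_beta \<subseteq> K"
  shows "\<exists>I. horizontal_block N r d I \<and> a \<in> I \<and> b \<in> I"
proof -
  obtain xs where "horizontal_chain r d xs" "set xs \<subseteq> S" "a \<in> set xs" "b \<in> set xs"
    using base_segment_chain[OF assms] by blast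
  then have "horizontal_set N r d (set xs)" unfolding horizontal_set_def by blast
  then show ?thesis using horizontal_set_subset_block \<open>a \<in> set xs\<close> \<open>b \<in> set xs\<close> by blast
qed

end

locale isolated_top_gasket = based_gasket +
  assumes top: "top_isolated N r d K \<or> w_gamma \<notin> K"
begin

text \<open>The paper's index gamma; it is meaningful only under the top isolated condition, where
  K_low is K without its top piece phi gamma K.  Otherwise K_low is K.\<close>
definition gamma :: nat where
  "gamma = (SOME g. g \<in> S \<and> phi g w_gamma = w_gamma \<and>
     (\<forall>j\<in>S. j \<noteq> g \<longrightarrow> phi g ` Delta \<inter> phi j ` Delta = {}))"

definition K_low :: "(real \<times> real) set" where
  "K_low = (\<Union>j\<in>{j \<in> S. \<not> (top_isolated N r d K \<and> j = gamma)}. phi j ` K)"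

lemma gamma_spec:
  assumes "top_isolated N r d K"
  shows "gamma \<in> S" "phi gamma w_gamma = w_gamma"
    "\<And>j. j \<in> S \<Longrightarrow> j \<noteq> gamma \<Longrightarrow> phi gamma ` Delta \<inter> phi j ` Delta = {}"
proof -
  have "\<exists>g. g \<in> S \<and> phi g w_gamma = w_gamma \<and> (\<forall>j\<in>S. j \<noteq> g \<longrightarrow> phi g ` Delta \<inter> phi j ` Delta = {})"
    using assms unfolding top_isolated_def by blast
  then have "gamma \<in> S \<and> phi gamma w_gamma = w_gamma \<and>
      (\<forall>j\<in>S. j \<noteq> gamma \<longrightarrow> phi gamma ` Delta \<inter> phi j ` Delta = {})"
    unfolding gamma_def by (rule someI_ex)
  then show "gamma \<in> S" "phi gamma w_gamma = w_gamma"
    "\<And>j. j \<in> S \<Longrightarrow> j \<noteq> gamma \<Longrightarrow> phi gamma ` Delta \<inter> phi j ` Delta = {}"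
    by auto
qed

lemma gamma_ne_a: "top_isolated N r d K \<Longrightarrow> gamma \<noteq> a"
  using gamma_spec(2) a(2) sim_eq_affine[of r d a w_gamma] r_less_1[OF a(1)]
  by (auto simp: w_alpha_def w_gamma_def zero_prod_def)

lemma gamma_ne_b: "top_isolated N r d K \<Longrightarrow> gamma \<noteq> b"
proof
  assume "top_isolated N r d K" "gamma = b"
  have "height b = 0" using b(2) snd_phi[of b w_beta] by (simp add: w_beta_def)
  then have "sqrt 3 / 2 = r b * (sqrt 3 / 2)"
    using gamma_spec(2)[OF \<open>top_isolated N r d K\<close>] \<open>gamma = b\<close> snd_phi[of b w_gamma] by (simp add: w_gamma_def)
  then show False using r_less_1[OF b(1)] by simp
qed

lemma K_low_subset: "K_low \<subseteq> K"
  unfolding K_low_def using piece_subset_K by blast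

lemma closed_K_low: "closed K_low"
  unfolding K_low_def using closed_phi_image[OF compact_K] by (intro closed_UN) auto

lemma compact_K_low: "compact K_low"
  using closed_K_low K_low_subset compact_K by (meson bounded_subset compact_eq_bounded_closed)

lemma base_vertices_in_K_low: "w_alpha \<in> K_low" "w_beta \<in> K_low"
proof -
  have "a \<in> S" "b \<in> S" "\<not> (top_isolated N r d K \<and> a = gamma)" "\<not> (top_isolated N r d K \<and> b = gamma)"
    using a(1) b(1) gamma_ne_a gamma_ne_b by auto
  moreover have "w_alpha \<in> phi a ` K" "w_beta \<in> phi b ` K"
    using a(2) b(2) w_alpha_in_K w_beta_in_K by (metis image_eqI)+
  ultimately show "w_alpha \<in> K_low" "w_beta \<in> K_low" unfolding K_low_def by blast+
qed

lemma K_low_eq_K: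
  assumes "\<not> top_isolated N r d K" shows "K_low = K"
proof -
  have "{j \<in> S. \<not> (top_isolated N r d K \<and> j = gamma)} = S" using assms by blast
  then show ?thesis unfolding K_low_def using K_self_similar by simp
qed

lemma K_split_top:
  assumes "top_isolated N r d K"
  shows "K = phi gamma ` K \<union> K_low" "phi gamma ` K \<inter> K_low = {}"
proof -
  have "S = insert gamma {j \<in> S. \<not> (top_isolated N r d K \<and> j = gamma)}"
    using gamma_spec(1)[OF assms] by auto
  then show "K = phi gamma ` K \<union> K_low" unfolding K_low_def by (subst K_self_similar) auto
  show "phi gamma ` K \<inter> K_low = {}"
    unfolding K_low_def using gamma_spec(3)[OF assms] assms K_subset_Delta by blast
qed

lemma w_gamma_notin_K_low: "w_gamma \<notin> K_low"
proof (cases "top_isolated N r d K")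
  case True
  then have "w_gamma \<in> phi gamma ` K"
    using gamma_spec(2) unfolding top_isolated_def by (metis image_eqI)
  then show ?thesis using K_split_top(2)[OF True] by blast
next
  case False
  then show ?thesis using top K_low_subset by blast
qed

lemma connected_in_top_piece_or_K_low:
  assumes "top_isolated N r d K" "connected E" "E \<subseteq> K"
  shows "E \<subseteq> phi gamma ` K \<or> E \<subseteq> K_low"
proof -
  have "E \<subseteq> phi gamma ` K \<union> K_low" using assms(3) K_split_top(1)[OF assms(1)] by blast
  moreover have "phi gamma ` K \<inter> K_low \<inter> E = {}" using K_split_top(2)[OF assms(1)] by blast
  ultimately show ?thesis
    using connected_subset_closed_cover[OF assms(2)] closed_phi_image[OF compact_K] closed_K_low by blast
qed

lemma connected_through_w_gamma:
  assumes "connected E" "E \<subseteq> K" "w_gamma \<in> E" "x \<in> E"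
  shows "x = w_gamma"
proof -
  have top_iso: "top_isolated N r d K" using top assms(2,3) by blast
  note g = gamma_spec[OF top_iso]
  let ?Q = "{(E, x). connected E \<and> E \<subseteq> K \<and> w_gamma \<in> E \<and> x \<in> E}"
  let ?f = "\<lambda>(E::(real \<times> real) set, x). dist x w_gamma"
  have "?f (E, x) \<le> 0"
  proof (rule nonpos_if_dominated_by_contraction[of ?Q ?f "diameter K" rho])
    show "(E, x) \<in> ?Q" using assms by simp
    show "0 \<le> rho" "rho < 1" using rho_nonneg rho_less_1 by auto
  next
    fix q assume "q \<in> ?Q"
    then obtain E x where Q: "q = (E, x)" "connected E" "E \<subseteq> K" "w_gamma \<in> E" "x \<in> E" by blast
    show "?f q \<le> diameter K" using Q by (auto intro: dist_le_diameter_K)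
    have "E \<subseteq> phi gamma ` K"
      using connected_in_top_piece_or_K_low[OF top_iso Q(2,3)] Q(4) w_gamma_notin_K_low by blast
    then obtain D where D: "connected D" "D \<subseteq> K" "E = phi gamma ` D"
      using connected_within_piece_rescaled[OF g(1) Q(2)] by blast
    obtain y where y: "y \<in> D" "x = phi gamma y" using Q(5) D(3) by blast
    obtain z where z: "z \<in> D" "phi gamma z = phi gamma w_gamma" using Q(4) D(3) g(2) by auto
    then have "w_gamma \<in> D" using phi_eq_iff[OF g(1)] by simp
    have "dist x w_gamma = dist (phi gamma y) (phi gamma w_gamma)" using y(2) g(2) by simp
    also have "\<dots> = r gamma * dist y w_gamma" by (rule dist_phi[OF g(1)])
    also have "\<dots> \<le> rho * dist y w_gamma" using rho_ge[OF g(1)] by (intro mult_right_mono) auto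
    finally have "?f q \<le> rho * ?f (D, y)" using Q(1) by simp
    moreover have "(D, y) \<in> ?Q" using D(1,2) \<open>w_gamma \<in> D\<close> y(1) by simp
    ultimately show "\<exists>q'\<in>?Q. ?f q \<le> rho * ?f q'" by blast
  qed
  then show ?thesis by simp
qed

lemma top_subpiece_cut:
  assumes top_iso: "top_isolated N r d K" and j: "j \<in> S" "j \<noteq> gamma"
  defines "A \<equiv> phi j ` phi gamma ` K"
    and "B \<equiv> phi j ` K_low \<union> (\<Union>k\<in>S - {j}. phi k ` K)"
  shows "K = A \<union> B" "closed A" "closed B" "A \<inter> B \<subseteq> {phi j w_gamma}"
proof -
  note g = gamma_spec[OF top_iso]
  have split_j: "phi j ` K = A \<union> phi j ` K_low"
    unfolding A_def by (subst K_split_top(1)[OF top_iso]) (rule image_Un)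
  have "K = phi j ` K \<union> (\<Union>k\<in>S - {j}. phi k ` K)"
    using j(1) by (subst K_self_similar) blast
  then have "K = (A \<union> phi j ` K_low) \<union> (\<Union>k\<in>S - {j}. phi k ` K)" unfolding split_j .
  then show "K = A \<union> B" unfolding B_def by (simp only: Un_assoc)
  show "closed A" unfolding A_def by (rule closed_phi_image[OF compact_phi_image[OF compact_K]])
  show "closed B"
    unfolding B_def by (rule closed_Un[OF closed_phi_image[OF compact_K_low] closed_other_pieces])
  have "w_alpha \<notin> phi gamma ` Delta" "w_beta \<notin> phi gamma ` Delta"
    using w_alpha_only_in_piece_a[OF g(1)] w_beta_only_in_piece_b[OF g(1)]
      gamma_ne_a[OF top_iso] gamma_ne_b[OF top_iso] by blast+
  show "A \<inter> B \<subseteq> {phi j w_gamma}"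
  proof
    fix z assume z: "z \<in> A \<inter> B"
    then obtain t where t: "t \<in> phi gamma ` K" "z = phi j t" unfolding A_def by blast
    show "z \<in> {phi j w_gamma}"
    proof (cases "z \<in> phi j ` K_low")
      case True
      then obtain s where "s \<in> K_low" "z = phi j s" by blast
      then have "s = t" using t(2) phi_eq_iff[OF j(1)] by simp
      then show ?thesis using K_split_top(2)[OF top_iso] t(1) \<open>s \<in> K_low\<close> by blast
    next
      case False
      then obtain k where k: "k \<in> S" "k \<noteq> j" "z \<in> phi k ` K" using z unfolding B_def by blast
      have "z \<in> phi j ` K" using t piece_subset_K[OF g(1)] by blast
      then obtain v where v: "v \<in> {w_alpha, w_beta, w_gamma}" "v \<in> K" "z = phi j v"
        by (rule pieces_meet_at_vertices[OF j(1) k(1) k(2)[symmetric] _ k(3)])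
      then have "v = t" using t(2) phi_eq_iff[OF j(1)] by simp
      then have "v \<in> phi gamma ` Delta" using t(1) K_subset_Delta by blast
      then have "v = w_gamma"
        using v(1) \<open>w_alpha \<notin> phi gamma ` Delta\<close> \<open>w_beta \<notin> phi gamma ` Delta\<close>
        by (metis empty_iff insertE)
      then show ?thesis using v(3) by simp
    qed
  qed
qed

lemma connected_meets_top_subpiece_at_top:
  assumes top_iso: "top_isolated N r d K" and j: "j \<in> S" "j \<noteq> gamma"
    and E: "connected E" "E \<subseteq> K" "\<not> E \<subseteq> phi j ` K"
    and x: "x \<in> E" "x \<in> phi j ` phi gamma ` K"
  shows "x = phi j w_gamma" "x \<in> phi j ` K_low \<union> (\<Union>k\<in>S - {j}. phi k ` K)"
proof -
  define A where "A = phi j ` phi gamma ` K"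
  define B where "B = phi j ` K_low \<union> (\<Union>k\<in>S - {j}. phi k ` K)"
  note cut = top_subpiece_cut[OF top_iso j, folded A_def B_def]
  have "A \<subseteq> phi j ` K"
    unfolding A_def by (rule image_mono[OF piece_subset_K[OF gamma_spec(1)[OF top_iso]]])
  then have "\<not> E \<subseteq> A" using E(3) by blast
  moreover have "E \<subseteq> A \<union> B" using E(2) cut(1) by blast
  ultimately have p: "phi j w_gamma \<in> E \<inter> A \<inter> B" and "connected (E \<inter> A)"
    using connected_through_cut_point[OF E(1) _ cut(2,3,4) x(1)] x(2) unfolding A_def by blast+
  obtain D where D: "connected D" "D \<subseteq> K" "E \<inter> A = phi j ` D"
    using connected_within_piece_rescaled[OF j(1) \<open>connected (E \<inter> A)\<close>] \<open>A \<subseteq> phi j ` K\<close> by blast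
  obtain y where y: "y \<in> D" "x = phi j y" using x D(3) unfolding A_def by blast
  have "w_gamma \<in> D" using p D(3) phi_in_phi_image_iff[OF j(1)] by blast
  then have "y = w_gamma" using connected_through_w_gamma[OF D(1,2)] y(1) by blast
  then show "x = phi j w_gamma" using y(2) by simp
  then show "x \<in> phi j ` K_low \<union> (\<Union>k\<in>S - {j}. phi k ` K)" using p unfolding B_def by blast
qed

text \<open>Under the top isolated condition E avoids the top piece; a point of E in the top
  subpiece of a piece j is the cut point phi j w_gamma, which is a base vertex of another piece.\<close>
lemma point_in_low_piece_if_not_within_piece:
  assumes E: "connected E" "E \<subseteq> K" "\<not> within_piece E" and x: "x \<in> E"
  shows "\<exists>j\<in>S. x \<in> phi j ` K_low"
proof (cases "top_isolated N r d K")
  case False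
  show ?thesis using in_some_piece[of x] x E(2) K_low_eq_K[OF False] by auto
next
  case top_iso: True
  have "\<not> E \<subseteq> phi gamma ` K" using E(3) gamma_spec(1)[OF top_iso] unfolding within_piece_def by blast
  then have "E \<subseteq> K_low" using connected_in_top_piece_or_K_low[OF top_iso E(1,2)] by blast
  then have "x \<in> K_low" using x by blast
  then obtain j where "j \<in> {j \<in> S. \<not> (top_isolated N r d K \<and> j = gamma)}" "x \<in> phi j ` K"
    unfolding K_low_def by (rule UN_E)
  then have j: "j \<in> S" "j \<noteq> gamma" "x \<in> phi j ` K" using top_iso by auto
  show ?thesis
  proof (cases "x \<in> phi j ` K_low")
    case True
    then show ?thesis using j(1) by blast
  next
    case False
    have "phi j ` K = phi j ` phi gamma ` K \<union> phi j ` K_low"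
      by (subst K_split_top(1)[OF top_iso]) (rule image_Un)
    then have "x \<in> phi j ` phi gamma ` K" using j(3) False by blast
    moreover have "\<not> E \<subseteq> phi j ` K" using E(3) j(1) unfolding within_piece_def by blast
    ultimately have x_top: "x = phi j w_gamma" "x \<in> phi j ` K_low \<union> (\<Union>k\<in>S - {j}. phi k ` K)"
      using connected_meets_top_subpiece_at_top[OF top_iso j(1,2) E(1,2) _ x] by blast+
    then obtain k where k: "k \<in> S" "k \<noteq> j" "x \<in> phi k ` K" using False by blast
    obtain v where v: "v \<in> {w_alpha, w_beta, w_gamma}" "v \<in> K" "x = phi k v"
      by (rule pieces_meet_at_vertices[OF k(1) j(1) k(2) k(3) j(3)])
    have "v \<noteq> w_gamma"
      using vertex_images_distinct[OF k(1) j(1) k(2), of w_gamma] v(3) x_top(1) by auto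
    then have "v \<in> K_low" using v(1) base_vertices_in_K_low by auto
    then show ?thesis using k(1) v(3) by blast
  qed
qed

lemma low_piece_meets_other_piece_at_height:
  assumes j: "j \<in> S" and x: "x \<in> phi j ` K_low" and k: "k \<in> S" "k \<noteq> j" "x \<in> phi k ` K"
  shows "snd x = height j"
proof -
  obtain s where s: "s \<in> K_low" "x = phi j s" using x by blast
  then have "x \<in> phi j ` K" using K_low_subset by blast
  then obtain v where v: "v \<in> {w_alpha, w_beta, w_gamma}" "v \<in> K" "x = phi j v"
    by (rule pieces_meet_at_vertices[OF j k(1) k(2)[symmetric] _ k(3)])
  have "v = s" using v(3) s(2) phi_eq_iff[OF j] by simp
  then have "v \<noteq> w_gamma" using s(1) w_gamma_notin_K_low by blast
  then have "snd v = 0" using v(1) by (auto simp: w_alpha_def w_beta_def)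
  then show ?thesis using v(3) snd_phi[of j v] by simp
qed

lemma low_pieces_disjoint_if_heights_differ:
  assumes "j \<in> S" "k \<in> S" "height j \<noteq> height k"
  shows "phi j ` K_low \<inter> phi k ` K_low = {}"
proof (rule ccontr)
  assume "phi j ` K_low \<inter> phi k ` K_low \<noteq> {}"
  then obtain x where x: "x \<in> phi j ` K_low" "x \<in> phi k ` K_low" by blast
  have "k \<noteq> j" "x \<in> phi j ` K" "x \<in> phi k ` K" using assms(3) x K_low_subset by auto
  then have "snd x = height j" "snd x = height k"
    using low_piece_meets_other_piece_at_height assms(1,2) x by metis+
  then show False using assms(3) by simp
qed

lemma common_height_if_not_within_piece:
  assumes "connected E" "E \<subseteq> K" "\<not> within_piece E"
  obtains c where "\<And>x. x \<in> E \<Longrightarrow> \<exists>j\<in>S. x \<in> phi j ` K_low \<and> height j = c"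
proof (cases "E = {}")
  case True
  then show ?thesis using that by blast
next
  case False
  then obtain x0 where "x0 \<in> E" by blast
  then obtain j0 where j0: "j0 \<in> S" "x0 \<in> phi j0 ` K_low"
    using point_in_low_piece_if_not_within_piece[OF assms] by blast
  define U1 where "U1 = (\<Union>j\<in>{j \<in> S. height j = height j0}. phi j ` K_low)"
  define U2 where "U2 = (\<Union>j\<in>{j \<in> S. height j \<noteq> height j0}. phi j ` K_low)"
  have closed_union: "closed (\<Union>j\<in>{j \<in> S. P j}. phi j ` K_low)" for P
    using closed_phi_image[OF compact_K_low] by (intro closed_UN) auto
  have closed: "closed U1" "closed U2" unfolding U1_def U2_def by (rule closed_union)+
  have cover: "E \<subseteq> U1 \<union> U2"
  proof
    fix x assume "x \<in> E"
    then obtain j where "j \<in> S" "x \<in> phi j ` K_low"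
      using point_in_low_piece_if_not_within_piece[OF assms] by blast
    then show "x \<in> U1 \<union> U2" unfolding U1_def U2_def by (cases "height j = height j0") auto
  qed
  have disjoint: "U1 \<inter> U2 = {}"
    unfolding U1_def U2_def using low_pieces_disjoint_if_heights_differ by force
  have "E \<subseteq> U1 \<or> E \<subseteq> U2"
    using connected_subset_closed_cover[OF assms(1) cover closed] disjoint by blast
  moreover have "x0 \<in> U1" unfolding U1_def using j0 by blast
  ultimately have "E \<subseteq> U1" using \<open>x0 \<in> E\<close> disjoint by blast
  show ?thesis
  proof (rule that)
    fix x assume "x \<in> E"
    then show "\<exists>j\<in>S. x \<in> phi j ` K_low \<and> height j = height j0"
      using \<open>E \<subseteq> U1\<close> unfolding U1_def by blast
  qed
qed

text \<open>Boundary bumping inside the piece j; the vertex reached is not phi j w_gamma, since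
  connected sets through w_gamma are points and w_gamma is not in K_low.\<close>
lemma low_piece_point_joins_base_vertex:
  assumes E: "compact E" "connected E" "E \<subseteq> K" "\<not> within_piece E"
    and x: "x \<in> E" and j: "j \<in> S" "x \<in> phi j ` K_low"
  shows "\<exists>y D. x = phi j y \<and> connected D \<and> D \<subseteq> K \<and> y \<in> D \<and> (w_alpha \<in> D \<or> w_beta \<in> D)"
proof -
  have xj: "x \<in> phi j ` K" using j(2) K_low_subset by blast
  have "\<not> E \<subseteq> phi j ` K" using E(4) j(1) unfolding within_piece_def by blast
  then obtain D0 where D0: "connected D0" "x \<in> D0" "D0 \<subseteq> E \<inter> phi j ` K"
      "D0 \<inter> closure (E - phi j ` K) \<noteq> {}"
    using boundary_bumping_connected[OF E(1,2) closed_phi_image[OF compact_K] x xj] by blast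
  have "E - phi j ` K \<subseteq> (\<Union>k\<in>S - {j}. phi k ` K)" using E(3) in_some_piece by blast
  then have "closure (E - phi j ` K) \<subseteq> (\<Union>k\<in>S - {j}. phi k ` K)"
    by (rule closure_minimal[OF _ closed_other_pieces])
  then obtain p k where p: "p \<in> D0" "k \<in> S" "k \<noteq> j" "p \<in> phi k ` K" using D0(4) by blast
  have "p \<in> phi j ` K" using p(1) D0(3) by blast
  then obtain v where v: "v \<in> {w_alpha, w_beta, w_gamma}" "v \<in> K" "p = phi j v"
    by (rule pieces_meet_at_vertices[OF j(1) p(2) p(3)[symmetric] _ p(4)])
  obtain D where D: "connected D" "D \<subseteq> K" "D0 = phi j ` D"
    using connected_within_piece_rescaled[OF j(1) D0(1)] D0(3) by blast
  obtain y where y: "y \<in> D" "x = phi j y" using D0(2) D(3) by blast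
  have "v \<in> D" using p(1) v(3) D(3) phi_in_phi_image_iff[OF j(1)] by blast
  have "v \<noteq> w_gamma"
  proof
    assume "v = w_gamma"
    then have "y = w_gamma" using connected_through_w_gamma[OF D(1,2)] \<open>v \<in> D\<close> y(1) by blast
    then have "w_gamma \<in> K_low" using j(2) y(2) phi_in_phi_image_iff[OF j(1)] by blast
    then show False using w_gamma_notin_K_low by blast
  qed
  then have "w_alpha \<in> D \<or> w_beta \<in> D" using v(1) \<open>v \<in> D\<close> by blast
  then show ?thesis using D(1,2) y by blast
qed

lemma not_within_piece_decomposition:
  assumes "compact E" "connected E" "E \<subseteq> K" "\<not> within_piece E"
  obtains c where "\<And>x. x \<in> E \<Longrightarrow> \<exists>j\<in>S. \<exists>y D. height j = c \<and> x = phi j y \<and>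
      connected D \<and> D \<subseteq> K \<and> y \<in> D \<and> (w_alpha \<in> D \<or> w_beta \<in> D)"
proof -
  obtain c where c: "\<And>x. x \<in> E \<Longrightarrow> \<exists>j\<in>S. x \<in> phi j ` K_low \<and> height j = c"
    using common_height_if_not_within_piece[OF assms(2-4)] by blast
  show thesis
  proof (rule that)
    fix x assume "x \<in> E"
    then obtain j where "j \<in> S" "x \<in> phi j ` K_low" "height j = c" using c by blast
    then show "\<exists>j\<in>S. \<exists>y D. height j = c \<and> x = phi j y \<and>
        connected D \<and> D \<subseteq> K \<and> y \<in> D \<and> (w_alpha \<in> D \<or> w_beta \<in> D)"
      using low_piece_point_joins_base_vertex[OF assms \<open>x \<in> E\<close>] by blast
  qed
qed

lemma continuum_through_base_vertex_descends:
  assumes E: "compact E" "connected E" "E \<subseteq> K" and v: "v \<in> {w_alpha, w_beta}" "v \<in> E"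
    and "x \<in> E"
  shows "\<exists>j\<in>S. \<exists>y D. height j = 0 \<and> x = phi j y \<and> connected D \<and> D \<subseteq> K \<and> y \<in> D \<and>
    (w_alpha \<in> D \<or> w_beta \<in> D)"
proof (cases "within_piece E")
  case True
  then obtain i where i: "i \<in> S" "E \<subseteq> phi i ` K" unfolding within_piece_def by blast
  have fixed: "phi i v = v" "height i = 0"
    using piece_containing_base_vertex[OF i(1) v(1)] i(2) v(2) by auto
  obtain D where D: "connected D" "D \<subseteq> K" "E = phi i ` D"
    using connected_within_piece_rescaled[OF i(1) E(2) i(2)] by blast
  have "v \<in> D" using v(2) D(3) fixed(1) phi_in_phi_image_iff[OF i(1), of v D] by simp
  moreover obtain y where "y \<in> D" "x = phi i y" using \<open>x \<in> E\<close> D(3) by blast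
  ultimately show ?thesis using i(1) fixed(2) D(1,2) v(1) by blast
next
  case False
  then obtain c where c: "\<And>z. z \<in> E \<Longrightarrow> \<exists>j\<in>S. \<exists>y D. height j = c \<and> z = phi j y \<and>
      connected D \<and> D \<subseteq> K \<and> y \<in> D \<and> (w_alpha \<in> D \<or> w_beta \<in> D)"
    using not_within_piece_decomposition[OF E] by blast
  obtain j y where j: "j \<in> S" "height j = c" "v = phi j y" "y \<in> K" using c[OF v(2)] by blast
  have "snd v = 0" using v(1) by (auto simp: w_alpha_def w_beta_def)
  then have "c + r j * snd y = 0" using snd_phi[of j y] j(2,3) by simp
  moreover have "0 \<le> c" "0 \<le> r j * snd y"
    using height_nonneg[OF j(1)] j(2) r_pos[OF j(1)] snd_nonneg[OF j(4)] by auto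
  ultimately have "c = 0" by linarith
  then show ?thesis using c[OF \<open>x \<in> E\<close>] by blast
qed

lemma connected_through_base_vertex_horizontal:
  assumes "connected E" "E \<subseteq> K" "w_alpha \<in> E \<or> w_beta \<in> E" "x \<in> E"
  shows "snd x = 0"
proof -
  let ?Q = "{(E, x). connected E \<and> E \<subseteq> K \<and> (w_alpha \<in> E \<or> w_beta \<in> E) \<and> x \<in> E}"
  let ?f = "\<lambda>(E::(real \<times> real) set, x::real \<times> real). snd x"
  have "?f (E, x) \<le> 0"
  proof (rule nonpos_if_dominated_by_contraction[of ?Q ?f "diameter K" rho])
    show "(E, x) \<in> ?Q" using assms by simp
    show "0 \<le> rho" "rho < 1" using rho_nonneg rho_less_1 by auto
  next
    fix q assume "q \<in> ?Q"
    then obtain E x v where Q: "q = (E, x)" "connected E" "E \<subseteq> K" "v \<in> {w_alpha, w_beta}" "v \<in> E"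
        "x \<in> E"
      by blast
    have "snd x \<le> dist (snd x) (snd w_alpha)" by (simp add: w_alpha_def dist_real_def)
    also have "\<dots> \<le> dist x w_alpha" by (rule dist_snd_le)
    also have "\<dots> \<le> diameter K" using Q(3,6) w_alpha_in_K by (blast intro: dist_le_diameter_K)
    finally show "?f q \<le> diameter K" using Q(1) by simp
    have C: "compact (closure E)" "connected (closure E)" "closure E \<subseteq> K"
      "v \<in> closure E" "x \<in> closure E"
      using closure_connected_subset[OF Q(2,3)] Q(5,6) closure_subset by blast+
    obtain j y D where j: "j \<in> S" "height j = 0" "x = phi j y" "connected D" "D \<subseteq> K"
        "y \<in> D" "w_alpha \<in> D \<or> w_beta \<in> D"
      using continuum_through_base_vertex_descends[OF C(1-3) Q(4) C(4,5)] by blast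
    have "snd x = r j * snd y" using j(2,3) snd_phi[of j y] by simp
    also have "\<dots> \<le> rho * snd y"
      using rho_ge[OF j(1)] snd_nonneg[of y] j(5,6) by (intro mult_right_mono) auto
    finally have "?f q \<le> rho * ?f (D, y)" using Q(1) by simp
    moreover have "(D, y) \<in> ?Q" using j(4-7) by simp
    ultimately show "\<exists>q'\<in>?Q. ?f q \<le> rho * ?f q'" by blast
  qed
  moreover have "0 \<le> snd x" using snd_nonneg assms(2,4) by blast
  ultimately show ?thesis by simp
qed

lemma not_within_piece_level:
  assumes "compact E" "connected E" "E \<subseteq> K" "\<not> within_piece E"
  obtains c where "\<And>z. z \<in> E \<Longrightarrow> snd z = c"
proof -
  obtain c where c: "\<And>z. z \<in> E \<Longrightarrow> \<exists>j\<in>S. \<exists>y D. height j = c \<and> z = phi j y \<and>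
      connected D \<and> D \<subseteq> K \<and> y \<in> D \<and> (w_alpha \<in> D \<or> w_beta \<in> D)"
    using not_within_piece_decomposition[OF assms] by blast
  have "snd z = c" if z: "z \<in> E" for z
  proof -
    obtain j w D where "height j = c" "z = phi j w" "connected D" "D \<subseteq> K" "w \<in> D"
        "w_alpha \<in> D \<or> w_beta \<in> D"
      using c[OF z] by blast
    moreover have "snd w = 0"
      using connected_through_base_vertex_horizontal calculation(3-6) by blast
    ultimately show ?thesis using snd_phi[of j w] by simp
  qed
  then show thesis by (rule that)
qed

lemma connected_horizontal:
  assumes "connected E" "E \<subseteq> K" "x \<in> E" "y \<in> E"
  shows "snd x = snd y"
proof -
  have "\<bar>snd x - snd y\<bar> = 0"
  proof (rule scaling_pair_function_vanishes[where g = "\<lambda>x y. \<bar>snd x - snd y\<bar>"])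
    show "\<bar>snd x - snd y\<bar> \<le> diameter K" if "x \<in> K" "y \<in> K" for x y
      using dist_snd_le[of x y] dist_le_diameter_K[OF that] by (simp add: dist_real_def)
    show "\<bar>snd (phi i x) - snd (phi i y)\<bar> = r i * \<bar>snd x - snd y\<bar>" if "i \<in> S" for i x y
      using snd_phi[of i x] snd_phi[of i y] r_pos[OF that] by (simp add: abs_mult flip: right_diff_distrib)
    show "\<bar>snd x - snd y\<bar> = 0"
      if "compact E" "connected E" "E \<subseteq> K" "\<not> within_piece E" "x \<in> E" "y \<in> E" for E x y
      using not_within_piece_level[OF that(1-4)] that(5,6) by (metis abs_0 diff_self)
  qed (use assms in auto)
  then show ?thesis by simp
qed

lemma connected_component_segment:
  assumes "y \<in> connected_component_set K x" "z \<in> connected_component_set K x" "y \<noteq> z"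
  shows "\<exists>p q. p \<noteq> q \<and> connected_component_set K x = closed_segment p q"
proof (rule compact_connected_horizontal_eq_segment)
  let ?C = "connected_component_set K x"
  have "closed ?C" using compact_K by (simp add: closed_connected_component compact_imp_closed)
  then show "compact ?C" using compact_K connected_component_subset
    by (meson bounded_subset compact_eq_bounded_closed compact_imp_bounded)
  show "connected ?C" by (rule connected_connected_component)
  show "snd w = snd y" if "w \<in> ?C" for w
    using connected_horizontal[OF connected_connected_component connected_component_subset that assms(1)] .
qed (use assms in blast)+

text \<open>Otherwise E runs horizontally from v to a second vertex image phi i u of the piece,
  and, being convex, contains the image under phi i of the base segment.\<close>
lemma connected_through_base_vertex_within_piece:
  assumes no_segment: "\<not> closed_segment w_alpha w_beta \<subseteq> K"
    and E: "connected E" "E \<subseteq> K" and v: "v \<in> {w_alpha, w_beta}" "v \<in> E"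
    and i: "i \<in> S" "phi i v = v"
  shows "E \<subseteq> phi i ` K"
proof (rule ccontr)
  assume "\<not> E \<subseteq> phi i ` K"
  moreover have "v \<in> phi i ` K" using v(2) E(2) i(2) by (metis image_eqI subsetD)
  ultimately obtain p k where p: "p \<in> E" "p \<in> phi i ` K" "k \<in> S" "k \<noteq> i" "p \<in> phi k ` K"
    using connected_leaving_piece_meets_other_piece[OF i(1) E v(2)] by blast
  obtain u where u: "u \<in> {w_alpha, w_beta, w_gamma}" "u \<in> K" "p = phi i u"
    by (rule pieces_meet_at_vertices[OF i(1) p(3) p(4)[symmetric] p(2) p(5)])
  have horizontal: "snd z = 0" if "z \<in> E" for z
    using connected_through_base_vertex_horizontal[OF E] v that by blast
  have "u \<noteq> w_gamma"
  proof
    assume "u = w_gamma"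
    then have "snd p = height i + r i * (sqrt 3 / 2)" using u(3) snd_phi by (simp add: w_gamma_def)
    moreover have "0 < r i * (sqrt 3 / 2)" using r_pos[OF i(1)] by simp
    ultimately show False using horizontal[OF p(1)] height_nonneg[OF i(1)] by linarith
  qed
  moreover have "u \<noteq> v"
  proof
    assume "u = v"
    then have "phi k v = v" using piece_containing_base_vertex[OF p(3) v(1)] p(5) u(3) i(2) by simp
    then show False using vertex_images_distinct[OF i(1) p(3) p(4)[symmetric], of v] v(1) i(2) by auto
  qed
  ultimately have uv: "{v, u} = {w_alpha, w_beta}" using u(1) v(1) by auto
  have "convex E" using E(1) horizontal by (rule convex_connected_horizontal)
  then have "closed_segment v p \<subseteq> E" using v(2) p(1) closed_segment_subset by blast
  then have "closed_segment (phi i v) (phi i u) \<subseteq> K" using E(2) i(2) u(3) by simp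
  then have "closed_segment (phi i w_alpha) (phi i w_beta) \<subseteq> K"
    using uv by (metis closed_segment_commute doubleton_eq_iff)
  then show False using base_segment_from_piece[OF i(1)] no_segment by blast
qed

lemma connected_through_base_vertex_trivial:
  assumes no_segment: "\<not> closed_segment w_alpha w_beta \<subseteq> K"
    and "connected E" "E \<subseteq> K" and v: "v \<in> {w_alpha, w_beta}" "v \<in> E" and "x \<in> E"
  shows "x = v"
proof -
  obtain i where i: "i \<in> S" "phi i v = v" using v(1) a b by blast
  let ?Q = "{(E, x). connected E \<and> E \<subseteq> K \<and> v \<in> E \<and> x \<in> E}"
  let ?f = "\<lambda>(E::(real \<times> real) set, x). dist x v"
  have "?f (E, x) \<le> 0"
  proof (rule nonpos_if_dominated_by_contraction[of ?Q ?f "diameter K" rho])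
    show "(E, x) \<in> ?Q" using assms by simp
    show "0 \<le> rho" "rho < 1" using rho_nonneg rho_less_1 by auto
  next
    fix q assume "q \<in> ?Q"
    then obtain E x where Q: "q = (E, x)" "connected E" "E \<subseteq> K" "v \<in> E" "x \<in> E" by blast
    show "?f q \<le> diameter K" using Q by (auto intro: dist_le_diameter_K)
    have "E \<subseteq> phi i ` K"
      using connected_through_base_vertex_within_piece[OF no_segment Q(2,3) v(1) Q(4) i] .
    then obtain D where D: "connected D" "D \<subseteq> K" "E = phi i ` D"
      using connected_within_piece_rescaled[OF i(1) Q(2)] by blast
    have "v \<in> D" using Q(4) D(3) i(2) phi_in_phi_image_iff[OF i(1), of v D] by simp
    obtain y where y: "y \<in> D" "x = phi i y" using Q(5) D(3) by blast
    have "dist x v = dist (phi i y) (phi i v)" using y(2) i(2) by simp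
    also have "\<dots> = r i * dist y v" by (rule dist_phi[OF i(1)])
    also have "\<dots> \<le> rho * dist y v" using rho_ge[OF i(1)] by (intro mult_right_mono) auto
    finally have "?f q \<le> rho * ?f (D, y)" using Q(1) by simp
    moreover have "(D, y) \<in> ?Q" using D(1,2) \<open>v \<in> D\<close> y(1) by simp
    ultimately show "\<exists>q'\<in>?Q. ?f q \<le> rho * ?f q'" by blast
  qed
  then show ?thesis by simp
qed

lemma not_within_piece_finite:
  assumes no_segment: "\<not> closed_segment w_alpha w_beta \<subseteq> K"
    and E: "compact E" "connected E" "E \<subseteq> K" "\<not> within_piece E"
  shows "finite E"
proof -
  obtain c where c: "\<And>z. z \<in> E \<Longrightarrow> \<exists>j\<in>S. \<exists>y D. height j = c \<and> z = phi j y \<and>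
      connected D \<and> D \<subseteq> K \<and> y \<in> D \<and> (w_alpha \<in> D \<or> w_beta \<in> D)"
    using not_within_piece_decomposition[OF E] by blast
  have "E \<subseteq> (\<Union>j\<in>S. {phi j w_alpha, phi j w_beta})"
  proof
    fix z assume "z \<in> E"
    then obtain j w D where j: "j \<in> S" "z = phi j w" "connected D" "D \<subseteq> K" "w \<in> D"
        "w_alpha \<in> D \<or> w_beta \<in> D"
      using c by blast
    then have "w = w_alpha \<or> w = w_beta"
      using connected_through_base_vertex_trivial[OF no_segment j(3,4)] by blast
    then show "z \<in> (\<Union>j\<in>S. {phi j w_alpha, phi j w_beta})" using j(1,2) by blast
  qed
  then show "finite E" by (rule finite_subset) simp
qed

lemma connected_trivial_if_no_base_segment:
  assumes no_segment: "\<not> closed_segment w_alpha w_beta \<subseteq> K"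
    and "connected E" "E \<subseteq> K" "x \<in> E" "y \<in> E"
  shows "x = y"
proof -
  have "dist x y = 0"
  proof (rule scaling_pair_function_vanishes[where g = dist])
    show "dist x y \<le> diameter K" if "x \<in> K" "y \<in> K" for x y
      using that by (rule dist_le_diameter_K)
    show "dist (phi i x) (phi i y) = r i * dist x y" if "i \<in> S" for i x y
      using that by (rule dist_phi)
    show "dist x y = 0"
      if E: "compact E" "connected E" "E \<subseteq> K" "\<not> within_piece E" and "x \<in> E" "y \<in> E" for E x y
    proof -
      have "finite E" using not_within_piece_finite[OF no_segment E] .
      then obtain e where "E = {e}" using connected_finite_iff_sing[OF E(2)] \<open>x \<in> E\<close> by blast
      then show ?thesis using \<open>x \<in> E\<close> \<open>y \<in> E\<close> by simp
    qed
  qed (use assms in auto)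
  then show ?thesis by simp
qed

end

theorem lemmaA1:
  fixes N :: nat and r :: "nat \<Rightarrow> real" and d :: "nat \<Rightarrow> real \<times> real"
    and K :: "(real \<times> real) set" and a b :: nat
  assumes gasket: "fractal_gasket N r d K"
    and wa: "w_alpha \<in> K" and wb: "w_beta \<in> K"
    and a: "a \<in> {1..N}" "sim r d a w_alpha = w_alpha"
    and b: "b \<in> {1..N}" "sim r d b w_beta = w_beta"
    and top: "top_isolated N r d K \<or> w_gamma \<notin> K"
  shows "(\<forall>x\<in>K. \<forall>C. C = connected_component_set K x \<and> (\<exists>y z. y \<in> C \<and> z \<in> C \<and> y \<noteq> z)
              \<longrightarrow> (\<exists>p q. p \<noteq> q \<and> C = closed_segment p q))
         \<and> ((\<not> (\<exists>I. horizontal_block N r d I \<and> a \<in> I \<and> b \<in> I)) \<longrightarrow> totally_disconnected K)"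
proof -
  interpret isolated_top_gasket N r d K a b
    using assms by unfold_locales auto
  have "totally_disconnected K" if "\<not> (\<exists>I. horizontal_block N r d I \<and> a \<in> I \<and> b \<in> I)"
  proof -
    have no_segment: "\<not> closed_segment w_alpha w_beta \<subseteq> K" using base_segment_block that by blast
    show ?thesis
      unfolding totally_disconnected_def
      using connected_trivial_if_no_base_segment[OF no_segment connected_connected_component
          connected_component_subset] connected_component_refl
      by blast
  qed
  then show ?thesis using connected_component_segment by blast
qed

end
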